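(* Let $k\ge 3$ and let $G=(V,E)$ be a $k$-uniform hyperstar of size $d\ge 2$, with $V=[n]$, $E=\{e_1,\ldots,e_d\}$, and heart the vertex $1$. Let $\mathcal L$ be its Laplacian tensor. Then a nonzero vector $\mathbf x\in\mathbb R^n$ is an H-eigenvector of $\mathcal L$ corresponding to the H-eigenvalue $1$ if and only if $x_1=0$ and $\sum_{i=1}^d\prod_{s\in e_i\setminus\{1\}}x_s=0$.
   Context: A $k$-uniform hyperstar of size $d$ is a hypergraph whose vertex set is a disjoint union $V=V_0\cup V_1\cup\cdots\cup V_d$ with $|V_0|=1$, $|V_1|=\cdots=|V_d|=k-1$, and edge set $\{V_0\cup V_i: i\in[d]\}$; the vertex in $V_0$ is the heart. For a $k$-uniform hypergraph with $d_i$ the number of edges containing $i$, the Laplacian tensor $\mathcal L=\mathcal D-\mathcal A$ ($\mathcal D$ diagonal with entries $d_i$, $\mathcal A$ with entries $\frac1{(k-1)!}$ at index tuples forming an edge and $0$ otherwise) satisfies $(\mathcal L\mathbf x^{k-1})_i=d_ix_i^{k-1}-\sum_{e\in E,\,i\in e}\prod_{s\in e\setminus\{i\}}x_s$. A nonzero $\mathbf x$ is an H-eigenvector for the H-eigenvalue $\lambda$ if $(\mathcal L\mathbf x^{k-1})_i=\lambda x_i^{k-1}$ for all $i\in[n]$. *)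

theory Defs
  imports "HOL-Analysis.Analysis"
begin

text \<open>Hypergraphs: a vertex set V (a finite set of naturals) and an edge set E (a set of subsets of V).
  Real vectors on V = {1..n} are functions nat => real (values outside V are irrelevant).\<close>

definition is_hyperstar :: "nat \<Rightarrow> nat \<Rightarrow> nat set \<Rightarrow> nat \<Rightarrow> nat set set \<Rightarrow> bool" where
  "is_hyperstar k d V h E \<longleftrightarrow>
     (\<exists>W :: nat \<Rightarrow> nat set.
        (\<forall>i\<in>{1..d}. finite (W i) \<and> card (W i) = k - 1 \<and> h \<notin> W i) \<and>
        (\<forall>i\<in>{1..d}. \<forall>j\<in>{1..d}. i \<noteq> j \<longrightarrow> W i \<inter> W j = {}) \<and>
        V = insert h (\<Union>i\<in>{1..d}. W i) \<and>
        E = (\<lambda>i. insert h (W i)) ` {1..d})"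

definition hdeg :: "nat set set \<Rightarrow> nat \<Rightarrow> nat" where
  "hdeg E i = card {e\<in>E. i \<in> e}"

text \<open>(L x^{k-1})_i = d_i x_i^{k-1} - sum over edges e containing i of prod_{s in e - {i}} x_s.\<close>
definition lap_apply :: "nat \<Rightarrow> nat set set \<Rightarrow> (nat \<Rightarrow> real) \<Rightarrow> nat \<Rightarrow> real" where
  "lap_apply k E x i = real (hdeg E i) * x i ^ (k - 1) - (\<Sum>e\<in>{e\<in>E. i \<in> e}. \<Prod>s\<in>e - {i}. x s)"

definition lap_H_eigenvector :: "nat \<Rightarrow> nat set \<Rightarrow> nat set set \<Rightarrow> real \<Rightarrow> (nat \<Rightarrow> real) \<Rightarrow> bool" where
  "lap_H_eigenvector k V E lam x \<longleftrightarrow>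
     (\<exists>i\<in>V. x i \<noteq> 0) \<and> (\<forall>i\<in>V. lap_apply k E x i = lam * x i ^ (k - 1))"

end

theory Submission
  imports Defs
begin

text \<open>Every non-heart vertex v of a hyperstar lies in exactly one edge f, so its eigenvalue
  equation reads x_v^(k-1) - x_h \<Prod>(f - {h,v}) x = \<lambda> x_v^(k-1), while the heart lies in all d edges,
  giving d x_h^(k-1) - \<Sum>_f \<Prod>(f - {h}) x = \<lambda> x_h^(k-1). For \<lambda> = 1 and x_h \<noteq> 0 the non-heart
  equations force every edge product \<Prod>(f - {h}) x to vanish (pick any v \<in> f - {h}); the heart
  equation then becomes (d - 1) x_h^(k-1) = 0, a contradiction since d \<ge> 2. Hence x_h = 0, which
  makes all non-heart equations hold trivially and reduces the heart equation to
  \<Sum>_f \<Prod>(f - {h}) x = 0.\<close>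

lemma lap_apply_vertex_in_all_edges:
  assumes "\<forall>f\<in>E. i \<in> f"
  shows "lap_apply k E x i = real (card E) * x i ^ (k - 1) - (\<Sum>f\<in>E. \<Prod>s\<in>f - {i}. x s)"
proof -
  have "{f\<in>E. i \<in> f} = E" using assms by blast
  then show ?thesis unfolding lap_apply_def hdeg_def by simp
qed

lemma lap_apply_degree_one:
  assumes "{f\<in>E. v \<in> f} = {f}"
  shows "lap_apply k E x v = x v ^ (k - 1) - (\<Prod>s\<in>f - {v}. x s)"
  unfolding lap_apply_def hdeg_def assms by simp

lemma hyperstar_edge:
  assumes "is_hyperstar k d V h E" and "f \<in> E"
  shows "h \<in> f" and "f \<subseteq> V" and "finite f" and "card (f - {h}) = k - 1"
proof -
  obtain W where W: "\<forall>i\<in>{1..d}. finite (W i) \<and> card (W i) = k - 1 \<and> h \<notin> W i"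
    and V: "V = insert h (\<Union>i\<in>{1..d}. W i)" and E: "E = (\<lambda>i. insert h (W i)) ` {1..d}"
    using assms(1) unfolding is_hyperstar_def by blast
  obtain j where j: "j \<in> {1..d}" "f = insert h (W j)" using E assms(2) by blast
  show "h \<in> f" "f \<subseteq> V" "finite f" using W V j by auto
  have "f - {h} = W j" using W j by auto
  then show "card (f - {h}) = k - 1" using W j by simp
qed

lemma hyperstar_degree_one:
  assumes "is_hyperstar k d V h E" and "v \<in> V" and "v \<noteq> h"
  obtains f where "{f\<in>E. v \<in> f} = {f}"
proof -
  obtain W where W: "\<forall>i\<in>{1..d}. finite (W i) \<and> card (W i) = k - 1 \<and> h \<notin> W i"
    and disj: "\<forall>i\<in>{1..d}. \<forall>j\<in>{1..d}. i \<noteq> j \<longrightarrow> W i \<inter> W j = {}"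
    and V: "V = insert h (\<Union>i\<in>{1..d}. W i)" and E: "E = (\<lambda>i. insert h (W i)) ` {1..d}"
    using assms(1) unfolding is_hyperstar_def by blast
  obtain j where j: "j \<in> {1..d}" "v \<in> W j" using assms(2,3) V by blast
  have "{f\<in>E. v \<in> f} = {insert h (W j)}"
  proof (intro equalityI subsetI)
    fix f assume "f \<in> {f\<in>E. v \<in> f}"
    then obtain i where i: "i \<in> {1..d}" "f = insert h (W i)" "v \<in> W i"
      using E assms(3) by auto
    then have "i = j" using disj j by blast
    then show "f \<in> {insert h (W j)}" using i by simp
  qed (use E j in auto)
  then show ?thesis by (rule that)
qed

lemma hyperstar_heart_mem: "is_hyperstar k d V h E \<Longrightarrow> h \<in> V"
  unfolding is_hyperstar_def by blast

lemma hyperstar_lap_apply_heart: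
  assumes "is_hyperstar k d V h E"
  shows "lap_apply k E x h = real (card E) * x h ^ (k - 1) - (\<Sum>f\<in>E. \<Prod>s\<in>f - {h}. x s)"
  using hyperstar_edge(1)[OF assms] by (intro lap_apply_vertex_in_all_edges) blast

lemma hyperstar_lap_apply_pendant:
  assumes "is_hyperstar k d V h E" and "f \<in> E" and "v \<in> f" and "v \<noteq> h"
  shows "lap_apply k E x v = x v ^ (k - 1) - x h * (\<Prod>s\<in>f - {h, v}. x s)"
proof -
  note edge = hyperstar_edge[OF assms(1,2)]
  obtain g where g: "{f\<in>E. v \<in> f} = {g}"
    using hyperstar_degree_one[OF assms(1) _ assms(4)] edge(2) assms(3) by blast
  have "f \<in> {g}" unfolding g[symmetric] using assms(2,3) by simp
  then have "lap_apply k E x v = x v ^ (k - 1) - (\<Prod>s\<in>f - {v}. x s)"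
    using lap_apply_degree_one[OF g] by simp
  moreover have "(\<Prod>s\<in>f - {v}. x s) = x h * (\<Prod>s\<in>f - {v} - {h}. x s)"
    using edge assms(4) by (intro prod.remove) auto
  moreover have "f - {v} - {h} = f - {h, v}" by blast
  ultimately show ?thesis by simp
qed

lemma hyperstar_edge_products_vanish:
  assumes hs: "is_hyperstar k d V h E" and "k \<ge> 2"
    and eig: "\<forall>v\<in>V - {h}. lap_apply k E x v = x v ^ (k - 1)"
    and "x h \<noteq> 0" and "f \<in> E"
  shows "(\<Prod>s\<in>f - {h}. x s) = 0"
proof -
  note edge = hyperstar_edge[OF hs \<open>f \<in> E\<close>]
  have "f - {h} \<noteq> {}" using edge(4) \<open>k \<ge> 2\<close> by (intro notI) simp
  then obtain v where v: "v \<in> f" "v \<noteq> h" by blast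
  then have "v \<in> V" using edge(2) by blast
  then have "(\<Prod>s\<in>f - {h, v}. x s) = 0"
    using hyperstar_lap_apply_pendant[OF hs \<open>f \<in> E\<close> v, of x] eig v \<open>x h \<noteq> 0\<close> by simp
  moreover have "(\<Prod>s\<in>f - {h}. x s) = x v * (\<Prod>s\<in>f - {h} - {v}. x s)"
    using edge(3) v by (intro prod.remove) auto
  moreover have "f - {h} - {v} = f - {h, v}" by blast
  ultimately show ?thesis by simp
qed

lemma hyperstar_H_eigenvector_one_iff:
  assumes hs: "is_hyperstar k d V h E" and "k \<ge> 2" and "card E \<ge> 2"
    and "\<exists>i\<in>V. x i \<noteq> 0"
  shows "lap_H_eigenvector k V E 1 x \<longleftrightarrow> x h = 0 \<and> (\<Sum>f\<in>E. \<Prod>s\<in>f - {h}. x s) = 0"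
    (is "_ \<longleftrightarrow> _ \<and> ?T = 0")
proof -
  note heart = hyperstar_lap_apply_heart[OF hs, of x]
  have heart_zero: "lap_apply k E x h = x h ^ (k - 1) - ?T" if "x h = 0"
    using heart that \<open>k \<ge> 2\<close> by (simp add: power_0_left)
  have pendants: "lap_apply k E x v = x v ^ (k - 1)" if "x h = 0" and v: "v \<in> V" "v \<noteq> h" for v
  proof -
    obtain f where "{f\<in>E. v \<in> f} = {f}" using hyperstar_degree_one[OF hs v] .
    then have "f \<in> E" "v \<in> f" by auto
    then show ?thesis using hyperstar_lap_apply_pendant[OF hs _ _ v(2)] \<open>x h = 0\<close> by simp
  qed
  show ?thesis
  proof
    assume "lap_H_eigenvector k V E 1 x"
    then have eig: "\<forall>i\<in>V. lap_apply k E x i = x i ^ (k - 1)"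
      unfolding lap_H_eigenvector_def by simp
    have h: "h \<in> V" using hyperstar_heart_mem[OF hs] .
    have "x h = 0"
    proof (rule ccontr)
      assume "x h \<noteq> 0"
      then have "?T = 0"
        using hyperstar_edge_products_vanish[OF hs, of x] eig \<open>k \<ge> 2\<close> by simp
      then have "(real (card E) - 1) * x h ^ (k - 1) = 0"
        using eig h heart by (simp add: algebra_simps)
      then show False using \<open>card E \<ge> 2\<close> \<open>x h \<noteq> 0\<close> by simp
    qed
    moreover have "?T = 0" using eig h heart_zero[OF \<open>x h = 0\<close>] by force
    ultimately show "x h = 0 \<and> ?T = 0" ..
  next
    assume "x h = 0 \<and> ?T = 0"
    then have "lap_apply k E x i = x i ^ (k - 1)" if "i \<in> V" for i
      using heart_zero pendants that by (cases "i = h") auto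
    then show "lap_H_eigenvector k V E 1 x"
      unfolding lap_H_eigenvector_def using assms(4) by simp
  qed
qed

theorem proposition5p3:
  fixes k d n :: nat and E :: "nat set set" and e :: "nat \<Rightarrow> nat set" and x :: "nat \<Rightarrow> real"
  assumes "k \<ge> 3" and "d \<ge> 2"
    and "is_hyperstar k d {1..n} 1 E"
    and "bij_betw e {1..d} E"
    and "\<exists>i\<in>{1..n}. x i \<noteq> 0"
  shows "lap_H_eigenvector k {1..n} E 1 x \<longleftrightarrow>
           x 1 = 0 \<and> (\<Sum>i=1..d. \<Prod>s\<in>e i - {1}. x s) = 0"
proof -
  have "card E = d" using bij_betw_same_card[OF assms(4)] by simp
  moreover have "(\<Sum>i=1..d. \<Prod>s\<in>e i - {1}. x s) = (\<Sum>f\<in>E. \<Prod>s\<in>f - {1}. x s)"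
    using sum.reindex_bij_betw[OF assms(4)] by simp
  ultimately show ?thesis
    using hyperstar_H_eigenvector_one_iff[OF assms(3) _ _ assms(5)] assms(1,2) by simp
qed

end
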